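(* Let $\Gamma_1,\Gamma_2\subset SO(6)$ be the diagonal groups $\Gamma_1=\{(1,1,1,1,1,1),(-1,-1,-1,-1,-1,-1),(-1,-1,1,1,1,1),(-1,1,-1,1,1,1),(1,-1,-1,1,1,1),(-1,1,1,-1,-1,-1),(1,-1,1,-1,-1,-1),(1,1,-1,-1,-1,-1)\}$, $\Gamma_2=\{(1,1,1,1,1,1),(-1,-1,-1,-1,-1,-1),(-1,-1,1,1,1,1),(1,1,-1,-1,1,1),(1,1,1,1,-1,-1),(-1,-1,-1,-1,1,1),(-1,-1,1,1,-1,-1),(1,1,-1,-1,-1,-1)\}$ (entries listed on the diagonal). Let $H\cong SO(3)$ be the subgroup of $SO(6)$ of block matrices $\mathrm{diag}(A,I_3)$, $A\in SO(3)$, and let $M=SO(6)/H$ (the Stiefel manifold of orthonormal 3-frames in $\mathbb R^6$) carry the homogeneous metric induced from a biinvariant metric on $SO(6)$. Then $\mathcal O_1:=\Gamma_1\backslash M$ and $\mathcal O_2:=\Gamma_2\backslash M$ are isospectral, $\mathcal O_1$ has maximal isotropy order $4$, and $\mathcal O_2$ has maximal isotropy order $2$.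
   Context: $\Gamma_i$ acts on $M=G/H$ by left multiplication. For a good orbifold $\Gamma\backslash M$ the isotropy order of $p(\tilde x)$ is the order of the stabilizer $\Gamma_{\tilde x}$; the spectrum (on functions) consists of Laplace eigenvalues $\lambda$ of $M$ with multiplicities $\dim E_\lambda(M)^\Gamma$; isospectral means equal spectra with multiplicities. *)

theory Defs
  imports "HOL-Analysis.Analysis" "HOL-Library.Numeral_Type" "HOL-Library.Function_Algebras"
begin

text \<open>The coset gH
(H = diag(SO(3), I_3), the stabiliser of e4, e5, e6) corresponds to the frame
formed by the last three columns of g, so left multiplication of SO(6) on G/H
becomes left matrix multiplication on frames.\<close>

definition stiefel :: "(real^3^6) set" where
  "stiefel = {x. transpose x ** x = mat 1}"

definition diag6 :: "real list \<Rightarrow> real^6^6" where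
  "diag6 ds = (\<chi> i j. if i = j then ds ! nat (Rep_bit0 i) else 0)"

definition Gamma1 :: "(real^6^6) set" where
  "Gamma1 = diag6 ` {[1,1,1,1,1,1], [-1,-1,-1,-1,-1,-1], [-1,-1,1,1,1,1],
     [-1,1,-1,1,1,1], [1,-1,-1,1,1,1], [-1,1,1,-1,-1,-1], [1,-1,1,-1,-1,-1],
     [1,1,-1,-1,-1,-1]}"

definition Gamma2 :: "(real^6^6) set" where
  "Gamma2 = diag6 ` {[1,1,1,1,1,1], [-1,-1,-1,-1,-1,-1], [-1,-1,1,1,1,1],
     [1,1,-1,-1,1,1], [1,1,1,1,-1,-1], [-1,-1,-1,-1,1,1], [-1,-1,1,1,-1,-1],
     [1,1,-1,-1,-1,-1]}"

fun Ck :: "nat \<Rightarrow> ('a::real_normed_vector \<Rightarrow> real) \<Rightarrow> bool" where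
  "Ck 0 F = continuous_on UNIV F"
| "Ck (Suc n) F = (F differentiable_on UNIV \<and>
                    (\<forall>v. Ck n (\<lambda>x. frechet_derivative F (at x) v)))"

definition smooth :: "('a::real_normed_vector \<Rightarrow> real) \<Rightarrow> bool" where
  "smooth F = (\<forall>n. Ck n F)"

text \<open>C^\<infinity>(M): restrictions to the closed submanifold M of smooth functions on
the ambient space R^(6x3); functions are normalised to vanish off M.\<close>

definition smooth_fun_M :: "(real^3^6 \<Rightarrow> real) set" where
  "smooth_fun_M = {f. (\<forall>x. x \<notin> stiefel \<longrightarrow> f x = 0) \<and>
                      (\<exists>F. smooth F \<and> (\<forall>x\<in>stiefel. f x = F x))}"

text \<open>Biinvariant metric on so(6): \<langle>X,Y\<rangle> = -1/2 tr(XY); the matrices E_jk - E_kj (j<k)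
form an orthonormal basis, and exp(t(E_kj - E_jk)) is the rotation below. For
the normal homogeneous metric on M = G/H the Laplace-Beltrami operator is minus
the Casimir operator of this basis (acting on the lifted H-invariant function).\<close>

definition rot :: "6 \<Rightarrow> 6 \<Rightarrow> real \<Rightarrow> real^6^6" where
  "rot j k t = (\<chi> a b.
      if (a = j \<and> b = j) \<or> (a = k \<and> b = k) then cos t
      else if a = j \<and> b = k then - sin t
      else if a = k \<and> b = j then sin t
      else if a = b then 1 else 0)"

definition laplacian :: "(real^3^6 \<Rightarrow> real) \<Rightarrow> real^3^6 \<Rightarrow> real" where
  "laplacian f x = - (\<Sum>(j,k)\<in>{(j,k). j < k}.
       deriv (deriv (\<lambda>t. f (rot j k t ** x))) 0)"

definition eigenspace_M :: "real \<Rightarrow> (real^3^6 \<Rightarrow> real) set" where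
  "eigenspace_M lam = {f \<in> smooth_fun_M. \<forall>x\<in>stiefel. laplacian f x = lam * f x}"

definition invariant_under :: "(real^6^6) set \<Rightarrow> (real^3^6 \<Rightarrow> real) set" where
  "invariant_under \<Gamma> = {f. \<forall>\<gamma>\<in>\<Gamma>. \<forall>x\<in>stiefel. f (\<gamma> ** x) = f x}"

definition multiplicity_orb :: "(real^6^6) set \<Rightarrow> real \<Rightarrow> nat" where
  "multiplicity_orb \<Gamma> lam =
     vector_space.dim (\<lambda>c (f :: real^3^6 \<Rightarrow> real) x. c * f x)
       (eigenspace_M lam \<inter> invariant_under \<Gamma>)"

definition isospectral_orb :: "(real^6^6) set \<Rightarrow> (real^6^6) set \<Rightarrow> bool" where
  "isospectral_orb \<Gamma>1 \<Gamma>2 = (\<forall>lam. multiplicity_orb \<Gamma>1 lam = multiplicity_orb \<Gamma>2 lam)"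

definition isotropy_order :: "(real^6^6) set \<Rightarrow> real^3^6 \<Rightarrow> nat" where
  "isotropy_order \<Gamma> x = card {\<gamma>\<in>\<Gamma>. \<gamma> ** x = x}"

definition max_isotropy_order :: "(real^6^6) set \<Rightarrow> nat" where
  "max_isotropy_order \<Gamma> = Max (isotropy_order \<Gamma> ` stiefel)"

end

theory Submission
  imports Defs
begin

text \<open>Isospectrality is proved by transplantation. A signed permutation matrix g maps M to
itself and commutes with the Laplacian, because conjugation by g permutes the orthonormal
basis E_jk - E_kj of so(6) up to sign. Hence every linear combination T f = \<Sum> c_i (f \<circ> g_i)
preserves the eigenspaces. For suitable explicit coefficients and signed permutations, T
maps \<Gamma>1-invariant functions to \<Gamma>2-invariant ones and has an inverse of the same kind, so
the invariant parts of every eigenspace have equal dimension.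

An element of a diagonal group fixes a frame x iff it is +1 on every nonzero row of x.
Since the columns of x are orthonormal, x has rank 3, so its nonzero rows cannot lie in
a set of two vectors; this bounds the stabilisers, and the frame spanned by the last
three standard basis vectors attains the bounds.\<close>

lemma has_derivative_frechet_derivative_UNIV:
  "F differentiable_on UNIV \<Longrightarrow> (F has_derivative frechet_derivative F (at x)) (at x)"
  by (simp add: differentiable_on_def frechet_derivative_works)

lemma Ck_add: "Ck n F \<Longrightarrow> Ck n G \<Longrightarrow> Ck n (\<lambda>x. F x + G x)"
proof (induction n arbitrary: F G)
  case 0 then show ?case by (auto intro: continuous_intros)
next
  case (Suc n)
  have dF: "F differentiable_on UNIV" and dG: "G differentiable_on UNIV"
    using Suc.prems by auto
  have "frechet_derivative (\<lambda>x. F x + G x) (at x) v =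
      frechet_derivative F (at x) v + frechet_derivative G (at x) v" for x v
  proof -
    have "((\<lambda>x. F x + G x) has_derivative
        (\<lambda>v. frechet_derivative F (at x) v + frechet_derivative G (at x) v)) (at x)"
      by (intro has_derivative_add has_derivative_frechet_derivative_UNIV dF dG)
    from frechet_derivative_at[OF this] show ?thesis by metis
  qed
  moreover have "Ck n (\<lambda>x. frechet_derivative F (at x) v + frechet_derivative G (at x) v)" for v
    using Suc by auto
  ultimately show ?case using dF dG by simp
qed

lemma Ck_cmult: "Ck n F \<Longrightarrow> Ck n (\<lambda>x. c * F x)"
proof (induction n arbitrary: F)
  case 0 then show ?case by (auto intro: continuous_intros)
next
  case (Suc n)
  have dF: "F differentiable_on UNIV" using Suc.prems by auto
  have "frechet_derivative (\<lambda>x. c * F x) (at x) v = c * frechet_derivative F (at x) v" for x v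
  proof -
    have "((\<lambda>x. c * F x) has_derivative (\<lambda>v. c * frechet_derivative F (at x) v)) (at x)"
      by (intro has_derivative_mult_right has_derivative_frechet_derivative_UNIV dF)
    from frechet_derivative_at[OF this] show ?thesis by metis
  qed
  moreover have "Ck n (\<lambda>x. c * frechet_derivative F (at x) v)" for v
    using Suc by auto
  moreover have "(\<lambda>x. c * F x) differentiable_on UNIV"
    using dF by (simp add: differentiable_on_def)
  ultimately show ?case by simp
qed

lemma Ck_compose_linear: "bounded_linear L \<Longrightarrow> Ck n F \<Longrightarrow> Ck n (\<lambda>x. F (L x))"
proof (induction n arbitrary: F)
  case 0 then show ?case
    using continuous_on_compose2[of UNIV F UNIV L] linear_continuous_on[of L] by auto
next
  case (Suc n)
  have dF: "F differentiable_on UNIV" using Suc.prems by auto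
  have chain: "((\<lambda>x. F (L x)) has_derivative (\<lambda>v. frechet_derivative F (at (L x)) (L v))) (at x)"
    for x
    using diff_chain_at[OF bounded_linear_imp_has_derivative[OF Suc.prems(1)]
        has_derivative_frechet_derivative_UNIV[OF dF]]
    by (simp add: o_def)
  then have "frechet_derivative (\<lambda>x. F (L x)) (at x) v = frechet_derivative F (at (L x)) (L v)"
    for x v
    using frechet_derivative_at by metis
  moreover have "Ck n (\<lambda>x. frechet_derivative F (at (L x)) (L v))" for v
    using Suc by auto
  moreover have "(\<lambda>x. F (L x)) differentiable_on UNIV"
    using chain by (auto simp: differentiable_on_def differentiable_def)
  ultimately show ?case by simp
qed

lemma Ck_zero: "Ck n (\<lambda>x. 0)"
  by (induction n) (simp_all add: frechet_derivative_const)

lemma bounded_linear_matrix_mult_left: "bounded_linear (\<lambda>x::real^'n^'m. (g::real^'m^'k) ** x)"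
  by (auto intro!: linear_conv_bounded_linear[THEN iffD1] linearI
      simp: matrix_add_ldistrib matrix_matrix_mult_def vec_eq_iff sum_distrib_left
        sum.distrib algebra_simps)

definition twice_differentiable :: "(real \<Rightarrow> real) \<Rightarrow> bool" where
  "twice_differentiable \<phi> \<longleftrightarrow>
     (\<forall>t. \<phi> differentiable (at t)) \<and> (\<forall>t. deriv \<phi> differentiable (at t))"

lemma twice_differentiableD:
  assumes "twice_differentiable \<phi>"
  shows "DERIV \<phi> t :> deriv \<phi> t" "DERIV (deriv \<phi>) t :> deriv (deriv \<phi>) t"
  using assms by (simp_all add: twice_differentiable_def DERIV_deriv_iff_real_differentiable)

lemma twice_differentiableI:
  assumes "\<And>t. DERIV \<phi> t :> \<phi>' t" "\<And>t. DERIV \<phi>' t :> \<phi>'' t"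
  shows "twice_differentiable \<phi>" "deriv (deriv \<phi>) = \<phi>''"
proof -
  have d: "deriv \<phi> = \<phi>'" using assms(1) by (auto intro!: ext DERIV_imp_deriv)
  show "deriv (deriv \<phi>) = \<phi>''" unfolding d using assms(2) by (auto intro!: ext DERIV_imp_deriv)
  show "twice_differentiable \<phi>" unfolding twice_differentiable_def d using assms
    by (metis DERIV_deriv_iff_real_differentiable DERIV_imp_deriv)
qed

lemma deriv2_add:
  assumes "twice_differentiable \<phi>" "twice_differentiable \<psi>"
  shows "deriv (deriv (\<lambda>t. \<phi> t + \<psi> t)) t = deriv (deriv \<phi>) t + deriv (deriv \<psi>) t"
proof -
  have "\<And>t. DERIV (\<lambda>t. \<phi> t + \<psi> t) t :> deriv \<phi> t + deriv \<psi> t"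
    "\<And>t. DERIV (\<lambda>t. deriv \<phi> t + deriv \<psi> t) t :> deriv (deriv \<phi>) t + deriv (deriv \<psi>) t"
    by (intro DERIV_add twice_differentiableD assms)+
  from twice_differentiableI(2)[OF this] show ?thesis by simp
qed

lemma deriv2_cmult:
  assumes "twice_differentiable \<phi>"
  shows "deriv (deriv (\<lambda>t. c * \<phi> t)) t = c * deriv (deriv \<phi>) t"
proof -
  have "\<And>t. DERIV (\<lambda>t. c * \<phi> t) t :> c * deriv \<phi> t"
    "\<And>t. DERIV (\<lambda>t. c * deriv \<phi> t) t :> c * deriv (deriv \<phi>) t"
    by (intro DERIV_cmult twice_differentiableD assms)+
  from twice_differentiableI(2)[OF this] show ?thesis by simp
qed

lemma deriv2_rescale:
  assumes "twice_differentiable \<phi>"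
  shows "deriv (deriv (\<lambda>t. \<phi> (c * t))) t = c * c * deriv (deriv \<phi>) (c * t)"
proof -
  have "\<And>t. DERIV (\<lambda>t. \<phi> (c * t)) t :> deriv \<phi> (c * t) * c"
    by (intro DERIV_chain2[OF twice_differentiableD(1)[OF assms]] derivative_eq_intros) auto
  moreover have "\<And>t. DERIV (\<lambda>t. deriv \<phi> (c * t) * c) t :> deriv (deriv \<phi>) (c * t) * c * c"
    by (intro DERIV_cmult_right DERIV_chain2[OF twice_differentiableD(2)[OF assms]]
        derivative_eq_intros) auto
  ultimately have "deriv (deriv (\<lambda>t. \<phi> (c * t))) = (\<lambda>t. deriv (deriv \<phi>) (c * t) * c * c)"
    by (rule twice_differentiableI(2))
  then show ?thesis by simp
qed

lemma twice_differentiable_along_ellipse: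
  fixes F :: "'a::real_normed_vector \<Rightarrow> real"
  assumes "Ck 2 F"
  shows "twice_differentiable (\<lambda>t. F (cos t *\<^sub>R A + sin t *\<^sub>R B + C))"
proof -
  define L where "L t = cos t *\<^sub>R A + sin t *\<^sub>R B + C" for t
  define DF where "DF p = frechet_derivative F (at p)" for p
  have dF: "F differentiable_on UNIV" and dDF: "\<And>v. (\<lambda>p. DF p v) differentiable_on UNIV"
    using assms by (auto simp: numeral_2_eq_2 DF_def)
  have L': "(L has_derivative (\<lambda>h. h *\<^sub>R (- sin t *\<^sub>R A + cos t *\<^sub>R B))) (at t)" for t
  proof -
    have "(L has_vector_derivative (- sin t *\<^sub>R A + cos t *\<^sub>R B)) (at t)"
      unfolding L_def by (auto intro!: derivative_eq_intros)
    then show ?thesis by (simp add: has_vector_derivative_def)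
  qed
  have lin: "linear (DF p)" for p
    unfolding DF_def using dF by (simp add: differentiable_on_def linear_frechet_derivative)
  have D1: "DERIV (\<lambda>t. F (L t)) t :> (- sin t * DF (L t) A + cos t * DF (L t) B)" for t
  proof -
    have "((F \<circ> L) has_derivative (DF (L t) \<circ> (\<lambda>h. h *\<^sub>R (- sin t *\<^sub>R A + cos t *\<^sub>R B)))) (at t)"
      by (rule diff_chain_at[OF L'])
        (use dF in \<open>simp add: DF_def has_derivative_frechet_derivative_UNIV\<close>)
    moreover have "DF (L t) \<circ> (\<lambda>h. h *\<^sub>R (- sin t *\<^sub>R A + cos t *\<^sub>R B)) =
        (*) (- sin t * DF (L t) A + cos t * DF (L t) B)"
      using lin[of "L t"] by (auto simp: fun_eq_iff linear_add linear_scale linear_neg linear_diff algebra_simps)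
    ultimately show ?thesis by (simp add: has_field_derivative_def o_def)
  qed
  have "(\<lambda>t. DF (L t) v) differentiable (at t)" for v t
  proof -
    have "((\<lambda>p. DF p v) \<circ> L) differentiable (at t)"
      by (rule differentiable_chain_at)
        (use L' dDF in \<open>auto simp: differentiable_def differentiable_on_def\<close>)
    then show ?thesis by (simp add: o_def)
  qed
  then have "(\<lambda>t. - sin t * DF (L t) A + cos t * DF (L t) B) differentiable (at t)" for t
    by (intro differentiable_add differentiable_mult differentiable_minus)
      (auto simp: real_differentiable_def intro: DERIV_sin DERIV_cos)
  then obtain D2 where "\<And>t. DERIV (\<lambda>t. - sin t * DF (L t) A + cos t * DF (L t) B) t :> D2 t"
    using DERIV_deriv_iff_real_differentiable by metis
  from twice_differentiableI(1)[OF D1 this] show ?thesis unfolding L_def .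
qed

lemma sum_two_points:
  "(j::'a::finite) \<noteq> k \<Longrightarrow>
     (\<Sum>a\<in>UNIV. (if a = j then P a else if a = k then Q a else (0::real))) = P j + Q k"
  by (simp add: sum.If_cases Int_absorb1 Diff_eq[symmetric])

lemma rot_mult_row:
  assumes "j \<noteq> k"
  shows "(rot j k t ** (x::real^'n^6)) $ i =
    (if i = j then cos t *\<^sub>R x$j - sin t *\<^sub>R x$k
     else if i = k then sin t *\<^sub>R x$j + cos t *\<^sub>R x$k else x$i)"
proof -
  have r: "rot j k t $ i $ a =
      (if i = j then (if a = j then cos t else if a = k then - sin t else 0)
       else if i = k then (if a = k then cos t else if a = j then sin t else 0)
       else (if a = i then 1 else 0))" for a
    using assms by (auto simp: rot_def)
  show ?thesis
    using assms
    by (auto simp: vec_eq_iff matrix_matrix_mult_def r sum_two_points sum_two_points[of k j]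
        if_distrib[of "\<lambda>z. z * _"] sum.delta sum.delta' cong: if_cong)
qed

lemma rot_mult_eq_ellipse:
  assumes "j \<noteq> k"
  shows "rot j k t ** (x::real^'n^6) =
    cos t *\<^sub>R (\<chi> i. if i = j then x$j else if i = k then x$k else 0)
    + sin t *\<^sub>R (\<chi> i. if i = j then - x$k else if i = k then x$j else 0)
    + (\<chi> i. if i = j \<or> i = k then 0 else x$i)"
  using assms by (auto simp: vec_eq_iff rot_mult_row algebra_simps)

lemma rot_flip: "rot k j t = rot j k (- t)"
proof -
  have "rot k j t $ a $ b = rot j k (- t) $ a $ b" for a b
    unfolding rot_def vec_lambda_beta
    by (cases "a = j"; cases "a = k"; cases "b = j"; cases "b = k"; simp)
  then show ?thesis by (simp add: vec_eq_iff)
qed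

lemma stiefel_iff:
  "x \<in> stiefel \<longleftrightarrow> (\<forall>p q. (\<Sum>i\<in>UNIV. x$i$p * x$i$q) = (if p = q then 1 else 0))"
  by (simp add: stiefel_def vec_eq_iff matrix_matrix_mult_def transpose_def mat_def)

lemma rot_mult_stiefel:
  assumes jk: "j \<noteq> k" and x: "x \<in> stiefel"
  shows "rot j k t ** x \<in> stiefel"
proof -
  let ?y = "rot j k t ** x"
  have split: "sum f UNIV = f j + f k + sum f (UNIV - {j,k})" for f :: "6 \<Rightarrow> real"
    using jk by (simp add: sum.remove[of UNIV j] sum.remove[of "UNIV - {j}" k] insert_commute
        Diff_insert2[symmetric] add.assoc)
  have "(\<Sum>i\<in>UNIV. ?y$i$p * ?y$i$q) = (\<Sum>i\<in>UNIV. x$i$p * x$i$q)" for p q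
  proof -
    have "(cos t * x$j$p - sin t * x$k$p) * (cos t * x$j$q - sin t * x$k$q) +
        (sin t * x$j$p + cos t * x$k$p) * (sin t * x$j$q + cos t * x$k$q) =
        ((cos t)\<^sup>2 + (sin t)\<^sup>2) * (x$j$p * x$j$q + x$k$p * x$k$q)"
      by algebra
    then have "?y$j$p * ?y$j$q + ?y$k$p * ?y$k$q = x$j$p * x$j$q + x$k$p * x$k$q"
      using jk by (simp add: rot_mult_row)
    moreover have "(\<Sum>i\<in>UNIV - {j,k}. ?y$i$p * ?y$i$q) = (\<Sum>i\<in>UNIV - {j,k}. x$i$p * x$i$q)"
      using jk by (intro sum.cong) (auto simp: rot_mult_row)
    ultimately show ?thesis
      using split[of "\<lambda>i. ?y$i$p * ?y$i$q"] split[of "\<lambda>i. x$i$p * x$i$q"] by simp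
  qed
  with x show ?thesis by (simp add: stiefel_iff)
qed

lemma twice_differentiable_rot_orbit:
  assumes f: "f \<in> smooth_fun_M" and x: "x \<in> stiefel" and jk: "j \<noteq> k"
  shows "twice_differentiable (\<lambda>t. f (rot j k t ** x))"
proof -
  obtain F where F: "smooth F" "\<And>y. y \<in> stiefel \<Longrightarrow> f y = F y"
    using f by (auto simp: smooth_fun_M_def)
  have "(\<lambda>t. f (rot j k t ** x)) = (\<lambda>t. F (rot j k t ** x))"
    using F(2) rot_mult_stiefel[OF jk x] by auto
  moreover have "twice_differentiable (\<lambda>t. F (rot j k t ** x))"
    unfolding rot_mult_eq_ellipse[OF jk]
    by (rule twice_differentiable_along_ellipse) (use F(1) in \<open>simp add: smooth_def\<close>)
  ultimately show ?thesis by simp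
qed

section \<open>Signed permutation matrices\<close>

definition signed_perm :: "('n::finite \<Rightarrow> real) \<Rightarrow> ('n \<Rightarrow> 'n) \<Rightarrow> real^'n^'n" where
  "signed_perm s \<sigma> = (\<chi> i j. if j = \<sigma> i then s i else 0)"

definition signed_perms :: "(real^'n::finite^'n) set" where
  "signed_perms = {signed_perm s \<sigma> | s \<sigma>. bij \<sigma> \<and> (\<forall>i. s i = 1 \<or> s i = -1)}"

lemma signed_perm_mult: "signed_perm s \<sigma> ** (x::real^'m^'n) = (\<chi> i. s i *\<^sub>R x $ \<sigma> i)"
  by (simp add: vec_eq_iff matrix_matrix_mult_def signed_perm_def if_distrib[of "\<lambda>z. z * _"]
      sum.delta cong: if_cong)

lemma sign_square: "s = 1 \<or> s = -1 \<Longrightarrow> s * s = (1::real)"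
  by auto

lemma signed_perm_mult_stiefel_iff:
  assumes g: "g \<in> signed_perms"
  shows "g ** x \<in> stiefel \<longleftrightarrow> x \<in> stiefel"
proof -
  obtain s \<sigma> where g: "g = signed_perm s \<sigma>" "bij \<sigma>" "\<And>i. s i = 1 \<or> s i = -1"
    using g by (auto simp: signed_perms_def)
  have "(\<Sum>i\<in>UNIV. (g ** x)$i$p * (g ** x)$i$q) = (\<Sum>i\<in>UNIV. x$i$p * x$i$q)" for p q
  proof -
    have "(\<Sum>i\<in>UNIV. (g ** x)$i$p * (g ** x)$i$q) = (\<Sum>i\<in>UNIV. x$(\<sigma> i)$p * x$(\<sigma> i)$q)"
      using sign_square[OF g(3)]
      by (intro sum.cong refl) (simp add: g(1) signed_perm_mult algebra_simps)
    also have "\<dots> = (\<Sum>i\<in>UNIV. x$i$p * x$i$q)"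
      using g(2) by (intro sum.reindex_bij_betw)
    finally show ?thesis .
  qed
  then show ?thesis by (simp add: stiefel_iff)
qed

lemma signed_perm_rot:
  assumes "bij \<sigma>" "s a = 1 \<or> s a = -1" "s b = 1 \<or> s b = -1" "a \<noteq> b"
  shows "signed_perm s \<sigma> ** (rot (\<sigma> a) (\<sigma> b) t ** x) =
    rot a b (s a * s b * t) ** (signed_perm s \<sigma> ** (x::real^'n^6))"
proof -
  have inj: "\<sigma> i = \<sigma> j \<longleftrightarrow> i = j" for i j
    using assms(1) by (auto dest: bij_is_inj injD)
  show ?thesis
    using assms(2-4) inj[of a b]
    by (auto simp: vec_eq_iff signed_perm_mult rot_mult_row inj algebra_simps)
qed

lemma smooth_fun_MI:
  "smooth F \<Longrightarrow> (\<And>x. x \<in> stiefel \<Longrightarrow> f x = F x) \<Longrightarrow> (\<And>x. x \<notin> stiefel \<Longrightarrow> f x = 0) \<Longrightarrow>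
    f \<in> smooth_fun_M"
  by (auto simp: smooth_fun_M_def)

lemma smooth_fun_M_zero: "(\<lambda>x. 0) \<in> smooth_fun_M"
  by (rule smooth_fun_MI[of "\<lambda>x. 0"]) (simp_all add: smooth_def Ck_zero)

lemma smooth_fun_M_add:
  assumes "u \<in> smooth_fun_M" "v \<in> smooth_fun_M"
  shows "(\<lambda>x. u x + v x) \<in> smooth_fun_M"
proof -
  obtain F G where F: "smooth F" "\<And>x. x \<in> stiefel \<Longrightarrow> u x = F x" "\<And>x. x \<notin> stiefel \<Longrightarrow> u x = 0"
    and G: "smooth G" "\<And>x. x \<in> stiefel \<Longrightarrow> v x = G x" "\<And>x. x \<notin> stiefel \<Longrightarrow> v x = 0"
    using assms by (auto simp: smooth_fun_M_def)
  show ?thesis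
    by (rule smooth_fun_MI[of "\<lambda>x. F x + G x"]) (use F G in \<open>simp_all add: smooth_def Ck_add\<close>)
qed

lemma smooth_fun_M_cmult:
  assumes "u \<in> smooth_fun_M"
  shows "(\<lambda>x. c * u x) \<in> smooth_fun_M"
proof -
  obtain F where F: "smooth F" "\<And>x. x \<in> stiefel \<Longrightarrow> u x = F x" "\<And>x. x \<notin> stiefel \<Longrightarrow> u x = 0"
    using assms by (auto simp: smooth_fun_M_def)
  show ?thesis
    by (rule smooth_fun_MI[of "\<lambda>x. c * F x"]) (use F in \<open>simp_all add: smooth_def Ck_cmult\<close>)
qed

lemma smooth_fun_M_signed_perm:
  assumes g: "g \<in> signed_perms" and u: "u \<in> smooth_fun_M"
  shows "(\<lambda>x. u (g ** x)) \<in> smooth_fun_M"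
proof -
  obtain F where F: "smooth F" "\<And>x. x \<in> stiefel \<Longrightarrow> u x = F x" "\<And>x. x \<notin> stiefel \<Longrightarrow> u x = 0"
    using u by (auto simp: smooth_fun_M_def)
  show ?thesis
    by (rule smooth_fun_MI[of "\<lambda>x. F (g ** x)"])
      (use F in \<open>simp_all add: smooth_def Ck_compose_linear[OF bounded_linear_matrix_mult_left]
        signed_perm_mult_stiefel_iff[OF g]\<close>)
qed

definition rot_deriv2 :: "(real^3^6 \<Rightarrow> real) \<Rightarrow> real^3^6 \<Rightarrow> 6 \<Rightarrow> 6 \<Rightarrow> real" where
  "rot_deriv2 f x j k = deriv (deriv (\<lambda>t. f (rot j k t ** x))) 0"

lemma laplacian_eq_sum_rot_deriv2:
  "laplacian f x = - (\<Sum>(j,k)\<in>{(j,k). j < k}. rot_deriv2 f x j k)"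
  by (simp add: laplacian_def rot_deriv2_def)

lemma rot_deriv2_flip:
  assumes "f \<in> smooth_fun_M" "x \<in> stiefel" "j \<noteq> k"
  shows "rot_deriv2 f x k j = rot_deriv2 f x j k"
  using deriv2_rescale[OF twice_differentiable_rot_orbit[OF assms], of "-1" 0]
  by (simp add: rot_deriv2_def rot_flip[of k j])

lemma sum_less_pairs_eq_half_sum_distinct_pairs:
  fixes G :: "'a::{finite,linorder} \<Rightarrow> 'a \<Rightarrow> real"
  assumes "\<And>j k. j \<noteq> k \<Longrightarrow> G k j = G j k"
  shows "(\<Sum>(j,k)\<in>{(j,k). j < k}. G j k) = (\<Sum>(j,k)\<in>{(j,k). j \<noteq> k}. G j k) / 2"
proof -
  have "{(j,k). j \<noteq> k} = {(j,k). j < k} \<union> prod.swap ` {(j::'a,k). j < k}"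
    by (auto simp: image_iff neq_iff)
  then have "(\<Sum>(j,k)\<in>{(j,k). j \<noteq> k}. G j k) =
      (\<Sum>(j,k)\<in>{(j,k). j < k}. G j k) + (\<Sum>(j,k)\<in>prod.swap ` {(j,k). j < k}. G j k)"
    by (auto intro: sum.union_disjoint)
  moreover have "(\<Sum>(j,k)\<in>prod.swap ` {(j,k). j < k}. G j k) = (\<Sum>(j,k)\<in>{(j,k). j < k}. G j k)"
    by (subst sum.reindex) (auto intro: inj_onI sum.cong simp: assms)
  ultimately show ?thesis by simp
qed

lemma laplacian_eq_half_sum_distinct_pairs:
  assumes "f \<in> smooth_fun_M" "x \<in> stiefel"
  shows "laplacian f x = - (\<Sum>(j,k)\<in>{(j,k). j \<noteq> k}. rot_deriv2 f x j k) / 2"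
  using sum_less_pairs_eq_half_sum_distinct_pairs[of "rot_deriv2 f x"] rot_deriv2_flip[OF assms]
  by (simp add: laplacian_eq_sum_rot_deriv2)

lemma laplacian_add:
  assumes u: "u \<in> smooth_fun_M" and v: "v \<in> smooth_fun_M" and x: "x \<in> stiefel"
  shows "laplacian (\<lambda>y. u y + v y) x = laplacian u x + laplacian v x"
proof -
  have "rot_deriv2 (\<lambda>y. u y + v y) x j k = rot_deriv2 u x j k + rot_deriv2 v x j k"
    if "j < k" for j k
    using that unfolding rot_deriv2_def
    by (intro deriv2_add twice_differentiable_rot_orbit u v x) simp_all
  then show ?thesis
    by (simp add: laplacian_eq_sum_rot_deriv2 sum.distrib split_def)
qed

lemma laplacian_cmult:
  assumes u: "u \<in> smooth_fun_M" and x: "x \<in> stiefel"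
  shows "laplacian (\<lambda>y. c * u y) x = c * laplacian u x"
proof -
  have "rot_deriv2 (\<lambda>y. c * u y) x j k = c * rot_deriv2 u x j k" if "j < k" for j k
    using that unfolding rot_deriv2_def
    by (intro deriv2_cmult twice_differentiable_rot_orbit u x) simp
  then show ?thesis
    by (simp add: laplacian_eq_sum_rot_deriv2 sum_distrib_left split_def)
qed

lemma laplacian_zero: "x \<in> stiefel \<Longrightarrow> laplacian (\<lambda>y. 0) x = 0"
  using laplacian_cmult[OF smooth_fun_M_zero, of x 0] by simp

lemma bij_betw_map_prod_off_diagonal:
  fixes \<sigma> :: "'a \<Rightarrow> 'a"
  assumes \<sigma>: "bij \<sigma>"
  shows "bij_betw (map_prod \<sigma> \<sigma>) {(a,b). a \<noteq> b} {(j,k). j \<noteq> k}"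
proof -
  have inj: "\<sigma> i = \<sigma> j \<longleftrightarrow> i = j" for i j
    using \<sigma> by (auto dest: bij_is_inj injD)
  have "map_prod \<sigma> \<sigma> ` {(a,b). a \<noteq> b} = {(j,k). j \<noteq> k}"
  proof (intro equalityI subsetI)
    fix p :: "'a \<times> 'a" assume "p \<in> {(j,k). j \<noteq> k}"
    then obtain j k where p: "p = (j, k)" "j \<noteq> k" by auto
    have "\<sigma> (inv \<sigma> i) = i" for i by (rule surj_f_inv_f[OF bij_is_surj[OF \<sigma>]])
    with p show "p \<in> map_prod \<sigma> \<sigma> ` {(a,b). a \<noteq> b}"
      by (metis (mono_tags) case_prodI map_prod_simp mem_Collect_eq rev_image_eqI)
  qed (auto simp: inj)
  then show ?thesis by (auto simp: bij_betw_def inj_on_def inj)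
qed

text \<open>In the sum over ordered pairs (j, k), j \<noteq> k, conjugation by g only permutes the
summands; the sign change of the rotation angle disappears in the second derivative.\<close>

lemma laplacian_signed_perm:
  assumes g: "g \<in> signed_perms" and u: "u \<in> smooth_fun_M" and x: "x \<in> stiefel"
  shows "laplacian (\<lambda>y. u (g ** y)) x = laplacian u (g ** x)"
proof -
  obtain s \<sigma> where gs: "g = signed_perm s \<sigma>" and \<sigma>: "bij \<sigma>" and s: "\<And>i. s i = 1 \<or> s i = -1"
    using g by (auto simp: signed_perms_def)
  have gx: "g ** x \<in> stiefel" using signed_perm_mult_stiefel_iff[OF g] x by simp
  have summand: "rot_deriv2 (\<lambda>y. u (g ** y)) x (\<sigma> a) (\<sigma> b) = rot_deriv2 u (g ** x) a b"
    if "a \<noteq> b" for a b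
  proof -
    have "rot_deriv2 (\<lambda>y. u (g ** y)) x (\<sigma> a) (\<sigma> b) =
        deriv (deriv (\<lambda>t. (\<lambda>t. u (rot a b t ** (g ** x))) (s a * s b * t))) 0"
      unfolding rot_deriv2_def gs using \<sigma> s that by (simp add: signed_perm_rot)
    also have "\<dots> = (s a * s b) * (s a * s b) * rot_deriv2 u (g ** x) a b"
      using deriv2_rescale[OF twice_differentiable_rot_orbit[OF u gx that], of "s a * s b" 0]
      by (simp add: rot_deriv2_def)
    finally show ?thesis
      using sign_square[OF s[of a]] sign_square[OF s[of b]] by (simp add: algebra_simps)
  qed
  have "bij_betw (map_prod \<sigma> \<sigma>) {(a,b). a \<noteq> b} {(j,k). j \<noteq> k}"
    using \<sigma> by (rule bij_betw_map_prod_off_diagonal)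
  then have "(\<Sum>(j,k)\<in>{(j,k). j \<noteq> k}. rot_deriv2 (\<lambda>y. u (g ** y)) x j k) =
      (\<Sum>(a,b)\<in>{(a,b). a \<noteq> b}. rot_deriv2 (\<lambda>y. u (g ** y)) x (\<sigma> a) (\<sigma> b))"
    by (subst sum.reindex_bij_betw[symmetric]) (auto simp: split_def)
  also have "\<dots> = (\<Sum>(a,b)\<in>{(a,b). a \<noteq> b}. rot_deriv2 u (g ** x) a b)"
    by (intro sum.cong refl) (auto simp: summand)
  finally show ?thesis
    using laplacian_eq_half_sum_distinct_pairs[OF smooth_fun_M_signed_perm[OF g u] x]
      laplacian_eq_half_sum_distinct_pairs[OF u gx]
    by simp
qed

section \<open>Transplantation\<close>

definition transplant :: "(real \<times> (real^6^6)) list \<Rightarrow> (real^3^6 \<Rightarrow> real) \<Rightarrow> real^3^6 \<Rightarrow> real" where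
  "transplant L f x = (\<Sum>(c, g)\<leftarrow>L. c * f (g ** x))"

lemma transplant_Nil [simp]: "transplant [] f = (\<lambda>x. 0)"
  by (simp add: transplant_def fun_eq_iff)

lemma transplant_Cons [simp]:
  "transplant (cg # L) f = (\<lambda>x. fst cg * f (snd cg ** x) + transplant L f x)"
  by (simp add: transplant_def fun_eq_iff split_def)

lemma transplant_add: "transplant L (\<lambda>y. u y + v y) x = transplant L u x + transplant L v x"
  by (induction L) (auto simp: algebra_simps)

lemma transplant_cmult: "transplant L (\<lambda>y. c * u y) x = c * transplant L u x"
  by (induction L) (auto simp: algebra_simps)

lemma transplant_smooth:
  "snd ` set L \<subseteq> signed_perms \<Longrightarrow> f \<in> smooth_fun_M \<Longrightarrow> transplant L f \<in> smooth_fun_M"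
  by (induction L)
    (auto intro!: smooth_fun_M_zero smooth_fun_M_add smooth_fun_M_cmult smooth_fun_M_signed_perm)

lemma transplant_cong:
  assumes "snd ` set L \<subseteq> signed_perms" "x \<in> stiefel" "\<And>y. y \<in> stiefel \<Longrightarrow> u y = v y"
  shows "transplant L u x = transplant L v x"
  using assms(1)
  by (induction L) (auto simp: assms(2,3) signed_perm_mult_stiefel_iff)

lemma laplacian_transplant:
  assumes L: "snd ` set L \<subseteq> signed_perms" and f: "f \<in> smooth_fun_M" and x: "x \<in> stiefel"
  shows "laplacian (transplant L f) x = transplant L (laplacian f) x"
  using L
proof (induction L)
  case Nil then show ?case using x by (simp add: laplacian_zero)
next
  case (Cons cg L)
  then have g: "snd cg \<in> signed_perms" and L: "snd ` set L \<subseteq> signed_perms" by auto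
  have fg: "(\<lambda>y. f (snd cg ** y)) \<in> smooth_fun_M"
    by (rule smooth_fun_M_signed_perm[OF g f])
  have "laplacian (transplant (cg # L) f) x =
      laplacian (\<lambda>y. fst cg * f (snd cg ** y)) x + laplacian (transplant L f) x"
    by (simp add: laplacian_add[OF smooth_fun_M_cmult[OF fg] transplant_smooth[OF L f] x])
  also have "laplacian (\<lambda>y. fst cg * f (snd cg ** y)) x = fst cg * laplacian f (snd cg ** x)"
    by (simp add: laplacian_cmult[OF fg x] laplacian_signed_perm[OF g f x])
  finally show ?case using Cons.IH[OF L] by simp
qed

lemma transplant_eigenspace:
  assumes L: "snd ` set L \<subseteq> signed_perms" and f: "f \<in> eigenspace_M lam"
  shows "transplant L f \<in> eigenspace_M lam"
proof -
  have fs: "f \<in> smooth_fun_M" and fe: "\<And>x. x \<in> stiefel \<Longrightarrow> laplacian f x = lam * f x"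
    using f by (auto simp: eigenspace_M_def)
  have "laplacian (transplant L f) x = lam * transplant L f x" if x: "x \<in> stiefel" for x
  proof -
    have "laplacian (transplant L f) x = transplant L (laplacian f) x"
      by (rule laplacian_transplant[OF L fs x])
    also have "\<dots> = transplant L (\<lambda>y. lam * f y) x" by (rule transplant_cong[OF L x fe])
    also have "\<dots> = lam * transplant L f x" by (rule transplant_cmult)
    finally show ?thesis .
  qed
  then show ?thesis using transplant_smooth[OF L fs] by (simp add: eigenspace_M_def)
qed

definition globally_invariant :: "(real^6^6) set \<Rightarrow> (real^3^6 \<Rightarrow> real) \<Rightarrow> bool" where
  "globally_invariant \<Gamma> f \<longleftrightarrow> (\<forall>\<gamma>\<in>\<Gamma>. \<forall>x. f (\<gamma> ** x) = f x)"

text \<open>Functions in smooth_fun_M vanish off M, so their invariance on M extends to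
all matrices; this lets the transplantation identities be checked on arbitrary 6x3 matrices.\<close>

lemma invariant_under_iff_globally_invariant:
  assumes f: "f \<in> smooth_fun_M" and \<Gamma>: "\<Gamma> \<subseteq> signed_perms"
  shows "f \<in> invariant_under \<Gamma> \<longleftrightarrow> globally_invariant \<Gamma> f"
proof -
  have "f (\<gamma> ** x) = f x" if "\<gamma> \<in> \<Gamma>" "x \<notin> stiefel" for \<gamma> x
    using that f \<Gamma> signed_perm_mult_stiefel_iff[of \<gamma> x] by (auto simp: smooth_fun_M_def)
  then show ?thesis
    unfolding invariant_under_def globally_invariant_def by blast
qed

lemma (in vector_space) dim_image_eq_of_inj_on:
  assumes lin: "Vector_Spaces.linear scale scale T" and A: "subspace A" and inj: "inj_on T A"
  shows "dim (T ` A) = dim A"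
proof -
  interpret T: Vector_Spaces.linear scale scale T by (rule lin)
  obtain B where B: "B \<subseteq> A" "independent B" "A \<subseteq> span B" "card B = dim A"
    by (rule basis_exists)
  have spanB: "span B = A" using span_subspace[OF B(1,3) A] .
  have "span (T ` B) = span (T ` A)"
    by (metis spanB T.span_image span_span)
  moreover have "independent (T ` B)"
    using T.independent_injective_image[OF B(2)] inj spanB by simp
  ultimately have "dim (T ` A) = card (T ` B)" by (rule dim_eq_card)
  also have "\<dots> = card B" using card_image inj_on_subset[OF inj B(1)] by blast
  finally show ?thesis using B(4) by simp
qed

lemma vector_space_fun_scale: "vector_space (\<lambda>c (f :: 'a \<Rightarrow> real) x. c * f x)"
  by unfold_locales (simp_all add: fun_eq_iff distrib_left distrib_right)

lemma linear_transplant: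
  "Vector_Spaces.linear (\<lambda>c f x. c * f x) (\<lambda>c f x. c * f x) (transplant L)"
  unfolding Vector_Spaces.linear_iff
  by (auto simp: vector_space_fun_scale transplant_cmult transplant_add[symmetric] plus_fun_def)

lemma subspace_eigenspace_invariant:
  "module.subspace (\<lambda>c f x. c * f x) (eigenspace_M lam \<inter> invariant_under \<Gamma>)"
proof -
  interpret vector_space "\<lambda>c (f :: real^3^6 \<Rightarrow> real) x. c * f x"
    by (rule vector_space_fun_scale)
  show ?thesis
  proof (rule subspaceI)
    show "0 \<in> eigenspace_M lam \<inter> invariant_under \<Gamma>"
      using smooth_fun_M_zero laplacian_zero
      by (auto simp: eigenspace_M_def invariant_under_def zero_fun_def)
  next
    fix u v assume "u \<in> eigenspace_M lam \<inter> invariant_under \<Gamma>" "v \<in> eigenspace_M lam \<inter> invariant_under \<Gamma>"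
    then show "u + v \<in> eigenspace_M lam \<inter> invariant_under \<Gamma>"
      using smooth_fun_M_add laplacian_add
      by (auto simp: plus_fun_def eigenspace_M_def invariant_under_def algebra_simps)
  next
    fix c u assume "u \<in> eigenspace_M lam \<inter> invariant_under \<Gamma>"
    then show "(\<lambda>x. c * u x) \<in> eigenspace_M lam \<inter> invariant_under \<Gamma>"
      using smooth_fun_M_cmult laplacian_cmult
      by (auto simp: eigenspace_M_def invariant_under_def algebra_simps)
  qed
qed

lemma multiplicity_orb_eq_of_transplant:
  assumes L: "snd ` set L \<subseteq> signed_perms" and L': "snd ` set L' \<subseteq> signed_perms"
    and \<Gamma>: "\<Gamma> \<subseteq> signed_perms" and \<Gamma>': "\<Gamma>' \<subseteq> signed_perms"
    and maps: "\<And>f. globally_invariant \<Gamma> f \<Longrightarrow> globally_invariant \<Gamma>' (transplant L f)"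
    and maps': "\<And>f. globally_invariant \<Gamma>' f \<Longrightarrow> globally_invariant \<Gamma> (transplant L' f)"
    and inverse: "\<And>f. globally_invariant \<Gamma> f \<Longrightarrow> transplant L' (transplant L f) = f"
    and inverse': "\<And>f. globally_invariant \<Gamma>' f \<Longrightarrow> transplant L (transplant L' f) = f"
  shows "multiplicity_orb \<Gamma> lam = multiplicity_orb \<Gamma>' lam"
proof -
  interpret vector_space "\<lambda>c (f :: real^3^6 \<Rightarrow> real) x. c * f x"
    by (rule vector_space_fun_scale)
  have E: "eigenspace_M lam \<inter> invariant_under \<Gamma> = {f \<in> eigenspace_M lam. globally_invariant \<Gamma> f}"
    if "\<Gamma> \<subseteq> signed_perms" for \<Gamma>
    using invariant_under_iff_globally_invariant[OF _ that] by (auto simp: eigenspace_M_def)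
  have img: "transplant L ` {f \<in> eigenspace_M lam. globally_invariant \<Gamma> f} =
      {f \<in> eigenspace_M lam. globally_invariant \<Gamma>' f}"
  proof (intro equalityI subsetI)
    fix f assume f: "f \<in> {f \<in> eigenspace_M lam. globally_invariant \<Gamma>' f}"
    then have "transplant L' f \<in> {f \<in> eigenspace_M lam. globally_invariant \<Gamma> f}"
      using L' maps' transplant_eigenspace by blast
    moreover have "f = transplant L (transplant L' f)"
      using f inverse' by simp
    ultimately show "f \<in> transplant L ` {f \<in> eigenspace_M lam. globally_invariant \<Gamma> f}" by blast
  next
    fix f assume "f \<in> transplant L ` {f \<in> eigenspace_M lam. globally_invariant \<Gamma> f}"
    then obtain h where "h \<in> eigenspace_M lam" "globally_invariant \<Gamma> h" "f = transplant L h"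
      by blast
    then show "f \<in> {f \<in> eigenspace_M lam. globally_invariant \<Gamma>' f}"
      using L maps transplant_eigenspace by blast
  qed
  have inj: "inj_on (transplant L) {f \<in> eigenspace_M lam. globally_invariant \<Gamma> f}"
    using inverse by (intro inj_onI) (metis mem_Collect_eq)
  have sub: "subspace {f \<in> eigenspace_M lam. globally_invariant \<Gamma> f}"
    using subspace_eigenspace_invariant[of lam \<Gamma>] by (simp add: E[OF \<Gamma>])
  show ?thesis
    unfolding multiplicity_orb_def E[OF \<Gamma>] E[OF \<Gamma>']
    using dim_image_eq_of_inj_on[OF linear_transplant sub inj] img by simp
qed

lemma exhaust_6: fixes i :: 6 shows "i = 0 \<or> i = 1 \<or> i = 2 \<or> i = 3 \<or> i = 4 \<or> i = 5"
proof (induct i)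
  case (of_int z)
  then have "z = 0 \<or> z = 1 \<or> z = 2 \<or> z = 3 \<or> z = 4 \<or> z = 5" by fastforce
  then show ?case by auto
qed

lemma forall_6: "(\<forall>i::6. P i) \<longleftrightarrow> P 0 \<and> P 1 \<and> P 2 \<and> P 3 \<and> P 4 \<and> P 5"
  using exhaust_6 by metis

lemma UNIV_6: "(UNIV :: 6 set) = {0, 1, 2, 3, 4, 5}"
  using exhaust_6 by blast

definition rows6 :: "real^3 \<Rightarrow> real^3 \<Rightarrow> real^3 \<Rightarrow> real^3 \<Rightarrow> real^3 \<Rightarrow> real^3 \<Rightarrow> real^3^6" where
  "rows6 a b c d e g = (\<chi> i. if i = 0 then a else if i = 1 then b else if i = 2 then c
      else if i = 3 then d else if i = 4 then e else g)"

lemma rows6_nth [simp]: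
  "rows6 a b c d e g $ 0 = a" "rows6 a b c d e g $ 1 = b" "rows6 a b c d e g $ 2 = c"
  "rows6 a b c d e g $ 3 = d" "rows6 a b c d e g $ 4 = e" "rows6 a b c d e g $ 5 = g"
  by (simp_all add: rows6_def)

lemma rows6_eq_iff:
  "rows6 a b c d e g = rows6 a' b' c' d' e' g' \<longleftrightarrow>
     a = a' \<and> b = b' \<and> c = c' \<and> d = d' \<and> e = e' \<and> g = g'"
  by (metis rows6_nth)

lemma vec_lambda_eq_rows6: "(\<chi> i. h i) = rows6 (h 0) (h 1) (h 2) (h 3) (h 4) (h 5)"
  unfolding vec_eq_iff using exhaust_6 by (auto simp: rows6_def)

lemma rows6_cases: obtains a b c d e g where "x = rows6 a b c d e g"
  using vec_lambda_eq_rows6[of "($) x"] by simp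

lemma nat_Rep_bit0_6 [simp]:
  "nat (Rep_bit0 (0::6)) = 0" "nat (Rep_bit0 (1::6)) = 1" "nat (Rep_bit0 (2::6)) = 2"
  "nat (Rep_bit0 (3::6)) = 3" "nat (Rep_bit0 (4::6)) = 4" "nat (Rep_bit0 (5::6)) = 5"
  by (simp_all add: bit0.Rep_numeral bit0.Rep_0 bit0.Rep_1)

definition sign_vec :: "real list \<Rightarrow> 6 \<Rightarrow> real" where
  "sign_vec l i = l ! nat (Rep_bit0 i)"

definition perm_of_list :: "nat list \<Rightarrow> 6 \<Rightarrow> 6" where
  "perm_of_list l i = of_nat (l ! nat (Rep_bit0 i))"

definition signed_perm_of_lists :: "real list \<Rightarrow> nat list \<Rightarrow> real^6^6" where
  "signed_perm_of_lists sl pl = signed_perm (sign_vec sl) (perm_of_list pl)"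

lemma diag6_eq_signed_perm: "diag6 l = signed_perm (sign_vec l) id"
  by (auto simp: diag6_def signed_perm_def sign_vec_def vec_eq_iff)

lemma signed_perm_of_lists_mult:
  "signed_perm_of_lists sl pl ** x = (\<chi> i. sign_vec sl i *\<^sub>R x $ perm_of_list pl i)"
  by (simp add: signed_perm_of_lists_def signed_perm_mult)

lemma diag6_mult_rows6:
  "diag6 l ** rows6 a b c d e g = rows6 (sign_vec l 0 *\<^sub>R a) (sign_vec l 1 *\<^sub>R b)
     (sign_vec l 2 *\<^sub>R c) (sign_vec l 3 *\<^sub>R d) (sign_vec l 4 *\<^sub>R e) (sign_vec l 5 *\<^sub>R g)"
  by (simp add: diag6_eq_signed_perm signed_perm_mult vec_lambda_eq_rows6)

lemma diag6_mem_signed_perms: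
  "(\<forall>i. sign_vec l i = 1 \<or> sign_vec l i = -1) \<Longrightarrow> diag6 l \<in> signed_perms"
  by (auto simp: diag6_eq_signed_perm signed_perms_def)

lemma signed_perm_of_lists_mem_signed_perms:
  assumes "\<forall>i j. perm_of_list pl i = perm_of_list pl j \<longrightarrow> i = j"
    and "\<forall>i. sign_vec sl i = 1 \<or> sign_vec sl i = -1"
  shows "signed_perm_of_lists sl pl \<in> signed_perms"
proof -
  have "inj (perm_of_list pl)" using assms(1) by (auto intro: injI)
  then have "bij (perm_of_list pl)" by (simp add: bij_def finite_UNIV_inj_surj)
  then show ?thesis using assms(2) by (auto simp: signed_perm_of_lists_def signed_perms_def)
qed

definition Gamma1_signs :: "real list set" where
  "Gamma1_signs = {[1,1,1,1,1,1], [-1,-1,-1,-1,-1,-1], [-1,-1,1,1,1,1],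
     [-1,1,-1,1,1,1], [1,-1,-1,1,1,1], [-1,1,1,-1,-1,-1], [1,-1,1,-1,-1,-1],
     [1,1,-1,-1,-1,-1]}"

definition Gamma2_signs :: "real list set" where
  "Gamma2_signs = {[1,1,1,1,1,1], [-1,-1,-1,-1,-1,-1], [-1,-1,1,1,1,1],
     [1,1,-1,-1,1,1], [1,1,1,1,-1,-1], [-1,-1,-1,-1,1,1], [-1,-1,1,1,-1,-1],
     [1,1,-1,-1,-1,-1]}"

lemma Gamma1_eq_diag6_image: "Gamma1 = diag6 ` Gamma1_signs"
  by (simp add: Gamma1_def Gamma1_signs_def)

lemma Gamma2_eq_diag6_image: "Gamma2 = diag6 ` Gamma2_signs"
  by (simp add: Gamma2_def Gamma2_signs_def)

lemma Gamma1_subset: "Gamma1 \<subseteq> signed_perms"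
  by (simp add: Gamma1_eq_diag6_image Gamma1_signs_def forall_6 sign_vec_def diag6_mem_signed_perms)

lemma Gamma2_subset: "Gamma2 \<subseteq> signed_perms"
  by (simp add: Gamma2_eq_diag6_image Gamma2_signs_def forall_6 sign_vec_def diag6_mem_signed_perms)

lemma Gamma1_invariance_rules:
  assumes "globally_invariant Gamma1 f"
  shows "f (rows6 a (-b) c d e g) = f (rows6 (-a) b c d e g)"
    "f (rows6 a b (-c) d e g) = f (rows6 (-a) b c d e g)"
    "f (rows6 a b c (-d) e g) = f (rows6 (-a) b c d (-e) (-g))"
proof -
  have I: "f (diag6 l ** y) = f y" if "l \<in> Gamma1_signs" for l y
    using assms that by (auto simp: globally_invariant_def Gamma1_eq_diag6_image)
  show "f (rows6 a (-b) c d e g) = f (rows6 (-a) b c d e g)"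
    using I[of "[-1,-1,1,1,1,1]" "rows6 (-a) b c d e g"]
    by (simp add: diag6_mult_rows6 sign_vec_def Gamma1_signs_def)
  show "f (rows6 a b (-c) d e g) = f (rows6 (-a) b c d e g)"
    using I[of "[-1,1,-1,1,1,1]" "rows6 (-a) b c d e g"]
    by (simp add: diag6_mult_rows6 sign_vec_def Gamma1_signs_def)
  show "f (rows6 a b c (-d) e g) = f (rows6 (-a) b c d (-e) (-g))"
    using I[of "[-1,1,1,-1,-1,-1]" "rows6 (-a) b c d (-e) (-g)"]
    by (simp add: diag6_mult_rows6 sign_vec_def Gamma1_signs_def)
qed

lemma Gamma2_invariance_rules:
  assumes "globally_invariant Gamma2 f"
  shows "f (rows6 a (-b) c d e g) = f (rows6 (-a) b c d e g)"
    "f (rows6 a b c (-d) e g) = f (rows6 a b (-c) d e g)"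
    "f (rows6 a b c d e (-g)) = f (rows6 a b c d (-e) g)"
proof -
  have I: "f (diag6 l ** y) = f y" if "l \<in> Gamma2_signs" for l y
    using assms that by (auto simp: globally_invariant_def Gamma2_eq_diag6_image)
  show "f (rows6 a (-b) c d e g) = f (rows6 (-a) b c d e g)"
    using I[of "[-1,-1,1,1,1,1]" "rows6 (-a) b c d e g"]
    by (simp add: diag6_mult_rows6 sign_vec_def Gamma2_signs_def)
  show "f (rows6 a b c (-d) e g) = f (rows6 a b (-c) d e g)"
    using I[of "[1,1,-1,-1,1,1]" "rows6 a b (-c) d e g"]
    by (simp add: diag6_mult_rows6 sign_vec_def Gamma2_signs_def)
  show "f (rows6 a b c d e (-g)) = f (rows6 a b c d (-e) g)"
    using I[of "[1,1,1,1,-1,-1]" "rows6 a b c d (-e) g"]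
    by (simp add: diag6_mult_rows6 sign_vec_def Gamma2_signs_def)
qed

definition transplant12 :: "(real \<times> (real^6^6)) list" where
  "transplant12 = map (\<lambda>(c, sl, pl). (c, signed_perm_of_lists sl pl))
     [(1/2, [1,1,1,1,1,1], [0,1,2,3,4,5]), (1/2, [1,1,1,1,-1,-1], [0,1,2,3,4,5]),
      (1/4, [1,1,1,1,1,1], [3,4,2,0,1,5]), (1/4, [1,1,1,-1,-1,1], [3,4,2,0,1,5]),
      (-1/4, [1,1,1,-1,1,-1], [3,4,2,0,1,5]), (-1/4, [1,1,1,1,-1,-1], [3,4,2,0,1,5]),
      (1/4, [1,1,1,1,1,1], [0,1,5,3,4,2]), (-1/4, [1,1,1,-1,-1,1], [0,1,5,3,4,2]),
      (1/4, [1,1,1,-1,1,-1], [0,1,5,3,4,2]), (-1/4, [1,1,1,1,-1,-1], [0,1,5,3,4,2])]"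

definition transplant21 :: "(real \<times> (real^6^6)) list" where
  "transplant21 = map (\<lambda>(c, sl, pl). (c, signed_perm_of_lists sl pl))
     [(1/2, [1,1,1,1,1,1], [0,1,2,3,4,5]), (1/2, [-1,1,-1,1,1,1], [0,1,2,3,4,5]),
      (1/4, [1,1,1,1,1,1], [3,4,2,0,1,5]), (-1/4, [-1,1,-1,1,1,1], [3,4,2,0,1,5]),
      (-1/4, [-1,1,1,1,-1,1], [3,4,2,0,1,5]), (1/4, [1,1,-1,1,-1,1], [3,4,2,0,1,5]),
      (1/4, [1,1,1,1,1,1], [0,1,5,3,4,2]), (-1/4, [-1,1,-1,1,1,1], [0,1,5,3,4,2]),
      (1/4, [-1,1,1,1,-1,1], [0,1,5,3,4,2]), (-1/4, [1,1,-1,1,-1,1], [0,1,5,3,4,2])]"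

lemma transplant12_signed_perms: "snd ` set transplant12 \<subseteq> signed_perms"
  by (simp add: transplant12_def forall_6 sign_vec_def perm_of_list_def
      signed_perm_of_lists_mem_signed_perms)

lemma transplant21_signed_perms: "snd ` set transplant21 \<subseteq> signed_perms"
  by (simp add: transplant21_def forall_6 sign_vec_def perm_of_list_def
      signed_perm_of_lists_mem_signed_perms)

lemmas transplant_rows6_simps = transplant12_def transplant21_def signed_perm_of_lists_mult
  vec_lambda_eq_rows6 sign_vec_def perm_of_list_def diag6_mult_rows6

lemma globally_invariant_transplant12:
  assumes f: "globally_invariant Gamma1 f"
  shows "globally_invariant Gamma2 (transplant transplant12 f)"
  unfolding globally_invariant_def
proof (intro ballI allI)
  fix \<gamma> x assume "\<gamma> \<in> Gamma2"
  then obtain l where l: "\<gamma> = diag6 l" "l \<in> Gamma2_signs"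
    by (auto simp: Gamma2_eq_diag6_image)
  obtain a b c d e g where x: "x = rows6 a b c d e g" by (rule rows6_cases)
  show "transplant transplant12 f (\<gamma> ** x) = transplant transplant12 f x"
    using l(2) unfolding l(1) x Gamma2_signs_def
    by (auto simp: transplant_rows6_simps Gamma1_invariance_rules[OF f] algebra_simps)
qed

lemma globally_invariant_transplant21:
  assumes f: "globally_invariant Gamma2 f"
  shows "globally_invariant Gamma1 (transplant transplant21 f)"
  unfolding globally_invariant_def
proof (intro ballI allI)
  fix \<gamma> x assume "\<gamma> \<in> Gamma1"
  then obtain l where l: "\<gamma> = diag6 l" "l \<in> Gamma1_signs"
    by (auto simp: Gamma1_eq_diag6_image)
  obtain a b c d e g where x: "x = rows6 a b c d e g" by (rule rows6_cases)
  show "transplant transplant21 f (\<gamma> ** x) = transplant transplant21 f x"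
    using l(2) unfolding l(1) x Gamma1_signs_def
    by (auto simp: transplant_rows6_simps Gamma2_invariance_rules[OF f] algebra_simps)
qed

lemma transplant21_transplant12:
  assumes f: "globally_invariant Gamma1 f"
  shows "transplant transplant21 (transplant transplant12 f) = f"
proof
  fix x :: "real^3^6"
  obtain a b c d e g where x: "x = rows6 a b c d e g" by (rule rows6_cases)
  show "transplant transplant21 (transplant transplant12 f) x = f x"
    unfolding x by (simp add: transplant_rows6_simps Gamma1_invariance_rules[OF f] algebra_simps)
qed

lemma transplant12_transplant21:
  assumes f: "globally_invariant Gamma2 f"
  shows "transplant transplant12 (transplant transplant21 f) = f"
proof
  fix x :: "real^3^6"
  obtain a b c d e g where x: "x = rows6 a b c d e g" by (rule rows6_cases)
  show "transplant transplant12 (transplant transplant21 f) x = f x"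
    unfolding x by (simp add: transplant_rows6_simps Gamma2_invariance_rules[OF f] algebra_simps)
qed

theorem isospectral_Gamma1_Gamma2: "isospectral_orb Gamma1 Gamma2"
  unfolding isospectral_orb_def
  by (intro allI multiplicity_orb_eq_of_transplant[OF transplant12_signed_perms
        transplant21_signed_perms Gamma1_subset Gamma2_subset globally_invariant_transplant12
        globally_invariant_transplant21 transplant21_transplant12 transplant12_transplant21])

section \<open>Isotropy orders\<close>

lemma stiefel_rows_not_within_two:
  assumes x: "x \<in> stiefel"
  shows "\<not> (\<forall>i. x$i = 0 \<or> x$i = u \<or> x$i = v)"
proof
  assume rows: "\<forall>i. x$i = 0 \<or> x$i = u \<or> x$i = v"
  have "dim {u, v} \<le> card {u, v}" by (rule dim_le_card') simp
  also have "\<dots> \<le> 2" by (simp add: card_insert_le_m1)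
  also have "\<dots> < DIM(real^3)" by simp
  finally obtain w :: "real^3" where w: "w \<noteq> 0" "\<And>y. y \<in> span {u, v} \<Longrightarrow> orthogonal w y"
    using orthogonal_to_subspace_exists by blast
  have "w \<bullet> u = 0" "w \<bullet> v = 0"
    using w(2)[of u] w(2)[of v] by (auto simp: orthogonal_def span_base)
  moreover have "(x *v w) $ i = x$i \<bullet> w" for i
    by (simp add: matrix_vector_mult_def inner_vec_def mult.commute)
  ultimately have "(x *v w) $ i = 0" for i
    using rows by (metis inner_commute inner_zero_left)
  then have "x *v w = 0" by (simp add: vec_eq_iff)
  then have "(transpose x ** x) *v w = 0" by (simp add: matrix_vector_mul_assoc[symmetric])
  then show False using x w(1) by (simp add: stiefel_def)
qed

lemma rows6_stiefel_zero_rows: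
  assumes "rows6 a b c d e g \<in> stiefel"
  shows "\<not> (a = 0 \<and> b = 0 \<and> c = 0 \<and> d = 0)" "\<not> (a = 0 \<and> b = 0 \<and> e = 0 \<and> g = 0)"
    "\<not> (a = 0 \<and> d = 0 \<and> e = 0 \<and> g = 0)" "\<not> (b = 0 \<and> d = 0 \<and> e = 0 \<and> g = 0)"
    "\<not> (c = 0 \<and> d = 0 \<and> e = 0 \<and> g = 0)"
  using stiefel_rows_not_within_two[OF assms, of e g] stiefel_rows_not_within_two[OF assms, of c d]
    stiefel_rows_not_within_two[OF assms, of b c] stiefel_rows_not_within_two[OF assms, of a c]
    stiefel_rows_not_within_two[OF assms, of a b]
  by (auto simp: forall_6)

lemma inj_on_diag6: "inj_on diag6 {l. length l = 6}"
proof (rule inj_onI)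
  fix l l' assume "l \<in> {l. length l = 6}" "l' \<in> {l. length l = 6}" and eq: "diag6 l = diag6 l'"
  have "l ! nat (Rep_bit0 i) = l' ! nat (Rep_bit0 i)" for i :: 6
    using arg_cong[OF eq, of "\<lambda>A. A $ i $ i"] by (simp add: diag6_def)
  then have "l ! n = l' ! n" if "n < 6" for n
    using that forall_6[of "\<lambda>i. l ! nat (Rep_bit0 i) = l' ! nat (Rep_bit0 i)"]
    by (auto simp: less_Suc_eq numeral_eq_Suc)
  with \<open>l \<in> _\<close> \<open>l' \<in> _\<close> show "l = l'" by (auto intro: nth_equalityI)
qed

lemma isotropy_order_diag6:
  assumes "S \<subseteq> {l. length l = 6}"
  shows "isotropy_order (diag6 ` S) x = card {l \<in> S. diag6 l ** x = x}"
proof -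
  have "{\<gamma> \<in> diag6 ` S. \<gamma> ** x = x} = diag6 ` {l \<in> S. diag6 l ** x = x}" by auto
  moreover have "inj_on diag6 {l \<in> S. diag6 l ** x = x}"
    by (rule inj_on_subset[OF inj_on_diag6]) (use assms in auto)
  ultimately show ?thesis
    unfolding isotropy_order_def by (simp add: card_image)
qed

lemma max_isotropy_order_eqI:
  assumes "\<And>x. x \<in> stiefel \<Longrightarrow> isotropy_order \<Gamma> x \<le> n" "x0 \<in> stiefel" "isotropy_order \<Gamma> x0 = n"
  shows "max_isotropy_order \<Gamma> = n"
  unfolding max_isotropy_order_def
proof (rule Max_eqI)
  show "finite (isotropy_order \<Gamma> ` stiefel)"
    by (rule finite_subset[of _ "{..n}"]) (auto simp: assms(1))
qed (use assms in auto)

lemma isotropy_order_Gamma1: "isotropy_order Gamma1 x = card {l \<in> Gamma1_signs. diag6 l ** x = x}"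
  unfolding Gamma1_eq_diag6_image by (rule isotropy_order_diag6) (auto simp: Gamma1_signs_def)

lemma isotropy_order_Gamma2: "isotropy_order Gamma2 x = card {l \<in> Gamma2_signs. diag6 l ** x = x}"
  unfolding Gamma2_eq_diag6_image by (rule isotropy_order_diag6) (auto simp: Gamma2_signs_def)

lemma neg_eq_self_iff: "- a = (a::real^3) \<longleftrightarrow> a = 0"
  by (auto simp: vec_eq_iff)

lemmas fixed_rows6_simps = diag6_mult_rows6 sign_vec_def rows6_eq_iff neg_eq_self_iff

definition base_frame :: "real^3^6" where
  "base_frame = rows6 0 0 0 (axis 1 1) (axis 2 1) (axis 3 1)"

lemma base_frame_stiefel: "base_frame \<in> stiefel"
proof -
  have "(\<Sum>i\<in>UNIV. base_frame$i$p * base_frame$i$q) = (if p = q then 1 else 0)" for p q :: 3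
  proof -
    have "(\<Sum>i\<in>UNIV. base_frame$i$p * base_frame$i$q) =
        (\<Sum>i\<in>{0,1,2,3,4,5::6}. base_frame$i$p * base_frame$i$q)"
      by (simp only: UNIV_6)
    also have "\<dots> = axis 1 1 $ p * axis 1 1 $ q + axis 2 1 $ p * axis 2 1 $ q + axis 3 1 $ p * axis 3 1 $ q"
      by (simp add: base_frame_def)
    also have "\<dots> = (if p = q then 1 else 0)"
      using exhaust_3[of p] exhaust_3[of q] by (auto simp: axis_def)
    finally show ?thesis .
  qed
  then show ?thesis by (simp add: stiefel_iff)
qed

lemma isotropy_order_Gamma1_le:
  assumes x: "x \<in> stiefel"
  shows "isotropy_order Gamma1 x \<le> 4"
proof -
  obtain a b c d e g where xr: "x = rows6 a b c d e g" by (rule rows6_cases)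
  note zero_rows = rows6_stiefel_zero_rows[OF x[unfolded xr]]
  have "diag6 l ** x \<noteq> x" if "l \<in> {[-1,-1,-1,-1,-1,-1], [-1,1,1,-1,-1,-1], [1,-1,1,-1,-1,-1],
      [1,1,-1,-1,-1,-1]}" for l
    using that zero_rows unfolding xr by (elim insertE emptyE) (simp_all add: fixed_rows6_simps)
  then have "{l \<in> Gamma1_signs. diag6 l ** x = x} \<subseteq>
      {[1,1,1,1,1,1], [-1,-1,1,1,1,1], [-1,1,-1,1,1,1], [1,-1,-1,1,1,1]}"
    unfolding Gamma1_signs_def by blast
  then have "card {l \<in> Gamma1_signs. diag6 l ** x = x} \<le> card
      {[1,1,1,1,1,1], [-1,-1,1,1,1,1], [-1,1,-1,1,1,1], [1,-1,-1,1,1,1::real]}"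
    by (rule card_mono[rotated]) simp
  also have "\<dots> \<le> 4" by (simp add: card_insert_if)
  finally show ?thesis by (simp add: isotropy_order_Gamma1)
qed

lemma isotropy_order_Gamma2_le:
  assumes x: "x \<in> stiefel"
  shows "isotropy_order Gamma2 x \<le> 2"
proof -
  obtain a b c d e g where xr: "x = rows6 a b c d e g" by (rule rows6_cases)
  note zero_rows = rows6_stiefel_zero_rows[OF x[unfolded xr]]
  let ?S = "{l \<in> Gamma2_signs. diag6 l ** x = x}"
  have excluded: "diag6 l ** x \<noteq> x" if "l \<in> {[-1,-1,-1,-1,-1,-1], [-1,-1,-1,-1,1,1],
      [-1,-1,1,1,-1,-1], [1,1,-1,-1,-1,-1]}" for l
    using that zero_rows unfolding xr by (elim insertE emptyE) (simp_all add: fixed_rows6_simps)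
  have fix01: "diag6 [-1,-1,1,1,1,1] ** x = x \<longleftrightarrow> a = 0 \<and> b = 0"
    and fix23: "diag6 [1,1,-1,-1,1,1] ** x = x \<longleftrightarrow> c = 0 \<and> d = 0"
    and fix45: "diag6 [1,1,1,1,-1,-1] ** x = x \<longleftrightarrow> e = 0 \<and> g = 0"
    unfolding xr by (simp_all add: fixed_rows6_simps)
  obtain p :: "real list" where "?S \<subseteq> {[1,1,1,1,1,1], p}"
  proof (cases "a = 0 \<and> b = 0")
    case True
    then have "?S \<subseteq> {[1,1,1,1,1,1], [-1,-1,1,1,1,1]}"
      using zero_rows(1,2) excluded fix23 fix45 unfolding Gamma2_signs_def by blast
    then show ?thesis by (rule that)
  next
    case ab: False
    show ?thesis
    proof (cases "c = 0 \<and> d = 0")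
      case True
      then have "?S \<subseteq> {[1,1,1,1,1,1], [1,1,-1,-1,1,1]}"
        using zero_rows(5) ab excluded fix01 fix45 unfolding Gamma2_signs_def by blast
      then show ?thesis by (rule that)
    next
      case False
      then have "?S \<subseteq> {[1,1,1,1,1,1], [1,1,1,1,-1,-1]}"
        using ab excluded fix01 fix23 unfolding Gamma2_signs_def by blast
      then show ?thesis by (rule that)
    qed
  qed
  then have "card ?S \<le> card {[1,1,1,1,1,1], p}" by (rule card_mono[rotated]) simp
  also have "\<dots> \<le> 2" by (simp add: card_insert_if)
  finally show ?thesis by (simp add: isotropy_order_Gamma2)
qed

lemma Collect_mem_insert:
  "{x \<in> insert a A. P x} = (if P a then insert a {x \<in> A. P x} else {x \<in> A. P x})"
  by auto

lemma isotropy_order_Gamma1_base_frame: "isotropy_order Gamma1 base_frame = 4"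
proof -
  have "{l \<in> Gamma1_signs. diag6 l ** base_frame = base_frame} =
      {[1,1,1,1,1,1], [-1,-1,1,1,1,1], [-1,1,-1,1,1,1], [1,-1,-1,1,1,1]}"
    unfolding Gamma1_signs_def base_frame_def
    by (simp only: Collect_mem_insert) (simp add: fixed_rows6_simps axis_eq_0_iff insert_commute)
  then show ?thesis by (simp add: isotropy_order_Gamma1)
qed

lemma isotropy_order_Gamma2_base_frame: "isotropy_order Gamma2 base_frame = 2"
proof -
  have "{l \<in> Gamma2_signs. diag6 l ** base_frame = base_frame} = {[1,1,1,1,1,1], [-1,-1,1,1,1,1]}"
    unfolding Gamma2_signs_def base_frame_def
    by (simp only: Collect_mem_insert) (simp add: fixed_rows6_simps axis_eq_0_iff insert_commute)
  then show ?thesis by (simp add: isotropy_order_Gamma2)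
qed

theorem mainTheorem4:
  shows "isospectral_orb Gamma1 Gamma2 \<and> max_isotropy_order Gamma1 = 4 \<and>
         max_isotropy_order Gamma2 = 2"
  using isospectral_Gamma1_Gamma2
    max_isotropy_order_eqI[OF isotropy_order_Gamma1_le base_frame_stiefel
      isotropy_order_Gamma1_base_frame]
    max_isotropy_order_eqI[OF isotropy_order_Gamma2_le base_frame_stiefel
      isotropy_order_Gamma2_base_frame]
  by blast

end
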